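(* Let $n\ge3$ and $\sigma\in\mathcal{H}_n$ with complexity $P=P(\sigma)\ge2$. Then for any finite generating set of $\mathcal{H}_n$, the word length $|\sigma|$ of $\sigma$ with respect to it satisfies $$P/C\le|\sigma|\le KP\log P,$$ where the constants $C,K>0$ depend only on the choice of generating set.
   Context: Let $\mathbb{N}=\{1,2,3,\dots\}$, $\mathbb{Z}_n$ the integers modulo $n$, $R_n=\mathbb{Z}_n\times\mathbb{N}$ (ray $i$ is $\{(i,k):k\in\mathbb{N}\}$). Permutations act on the right. The Houghton group $\mathcal{H}_n$ is the group of permutations $\sigma$ of $R_n$ for which there exist $N\ge0$ and integers $t_i(\sigma)$ with $(i,k)\sigma=(i,k+t_i(\sigma))$ for all $i\in\mathbb{Z}_n$, $k\ge N$; for $n\ge3$ it is finitely generated. For $\sigma\in\mathcal{H}_n$ and $i\in\mathbb{Z}_n$, $p_i(\sigma)$ is the largest integer $k\ge1$ such that $(i,k)\sigma\neq(i,k+t_i(\sigma))$ (this inequality holding automatically when $k+t_i(\sigma)\le0$), and $p_i(\sigma)=0$ if there is no such $k$. The complexity of $\sigma$ is $P(\sigma)=\sum_{i\in\mathbb{Z}_n}p_i(\sigma)$. *)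

theory Defs
  imports Complex_Main
begin

type_synonym point = "nat \<times> nat"
type_synonym perm = "point \<Rightarrow> point"

definition rays :: "nat \<Rightarrow> point set" where
  "rays n = {(i, k). i < n \<and> 1 \<le> k}"

text \<open>Elements of the Houghton group H_n: permutations of R_n (extended by the identity
  outside R_n) that are eventually translations on each ray.\<close>
definition houghton :: "nat \<Rightarrow> perm \<Rightarrow> bool" where
  "houghton n \<sigma> \<longleftrightarrow> bij_betw \<sigma> (rays n) (rays n) \<and> (\<forall>x. x \<notin> rays n \<longrightarrow> \<sigma> x = x) \<and>
     (\<exists>N::nat. \<exists>t::nat \<Rightarrow> int. \<forall>i<n. \<forall>k\<ge>N.
        1 \<le> int k + t i \<and> \<sigma> (i, k) = (i, nat (int k + t i)))"

definition transl :: "perm \<Rightarrow> nat \<Rightarrow> int" where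
  "transl \<sigma> i = (THE t. \<exists>N::nat. \<forall>k\<ge>N. 1 \<le> int k + t \<and> \<sigma> (i, k) = (i, nat (int k + t)))"

definition defect :: "perm \<Rightarrow> nat \<Rightarrow> nat \<Rightarrow> bool" where
  "defect \<sigma> i k \<longleftrightarrow> int k + transl \<sigma> i \<le> 0 \<or> \<sigma> (i, k) \<noteq> (i, nat (int k + transl \<sigma> i))"

definition pcomp :: "perm \<Rightarrow> nat \<Rightarrow> nat" where
  "pcomp \<sigma> i = (if \<exists>k\<ge>1. defect \<sigma> i k then Max {k. 1 \<le> k \<and> defect \<sigma> i k} else 0)"

definition complexity :: "nat \<Rightarrow> perm \<Rightarrow> nat" where
  "complexity n \<sigma> = (\<Sum>i<n. pcomp \<sigma> i)"

text \<open>Product of a word; permutations act on the right, so the word [s1,...,sm]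
  denotes s1 s2 ... sm, i.e. the map x |-> (...((x)s1)s2...)sm.\<close>
definition word_prod :: "perm list \<Rightarrow> perm" where
  "word_prod ws = foldl (\<lambda>acc s. s \<circ> acc) id ws"

definition gen_letters :: "perm set \<Rightarrow> perm set" where
  "gen_letters S = S \<union> inv ` S"

definition generates_houghton :: "nat \<Rightarrow> perm set \<Rightarrow> bool" where
  "generates_houghton n S \<longleftrightarrow> S \<subseteq> {\<sigma>. houghton n \<sigma>} \<and>
     (\<forall>\<sigma>. houghton n \<sigma> \<longrightarrow> (\<exists>ws. set ws \<subseteq> gen_letters S \<and> word_prod ws = \<sigma>))"

definition word_length :: "perm set \<Rightarrow> perm \<Rightarrow> nat" where
  "word_length S \<sigma> = (LEAST m. \<exists>ws. length ws = m \<and> set ws \<subseteq> gen_letters S \<and> word_prod ws = \<sigma>)"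

end

theory Submission
  imports Defs "HOL-Library.Log_Nat"
begin

text \<open>Complexity is subadditive, \<open>P(\<sigma>\<tau>) \<le> P(\<sigma>) + P(\<tau>)\<close>, so a word of length \<open>m\<close> in the
  generators has complexity at most \<open>m\<close> times that of the worst generator; this is the lower bound.
  For the upper bound, conjugating \<open>\<sigma>\<close> by \<open>O(P)\<close> elementary pushes between rays collects all
  of its irregularity into a permutation of the first \<open>P\<close> points of ray 0. That permutation is
  sorted by merge sort, where merging two segments of total length \<open>m\<close> costs \<open>O(m)\<close> pushes
  using a third ray as a stack, for \<open>O(P log P)\<close> pushes in total. Each push is a fixed word in
  the given generators.\<close>

section \<open>Translation lengths, complexity and the group structure\<close>

lemma transl_eqI:
  assumes "\<forall>k\<ge>N. 1 \<le> int k + t \<and> \<sigma> (i, k) = (i, nat (int k + t))"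
  shows "transl \<sigma> i = t"
  unfolding transl_def
proof (rule the_equality)
  show "\<exists>N. \<forall>k\<ge>N. 1 \<le> int k + t \<and> \<sigma> (i, k) = (i, nat (int k + t))"
    using assms by blast
next
  fix t' assume "\<exists>N. \<forall>k\<ge>N. 1 \<le> int k + t' \<and> \<sigma> (i, k) = (i, nat (int k + t'))"
  then obtain N' where N': "\<forall>k\<ge>N'. 1 \<le> int k + t' \<and> \<sigma> (i, k) = (i, nat (int k + t'))"
    by blast
  define k where "k = max N N'"
  have "1 \<le> int k + t' \<and> \<sigma> (i, k) = (i, nat (int k + t'))" using N' k_def by simp
  moreover have "1 \<le> int k + t \<and> \<sigma> (i, k) = (i, nat (int k + t))" using assms k_def by simp
  ultimately have "nat (int k + t') = nat (int k + t)" "1 \<le> int k + t'" "1 \<le> int k + t" by auto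
  then show "t' = t" by (smt (verit) eq_nat_nat_iff)
qed

lemma houghton_eventually_transl:
  assumes "houghton n \<sigma>" "i < n"
  shows "\<exists>N. \<forall>k\<ge>N. 1 \<le> int k + transl \<sigma> i \<and> \<sigma> (i, k) = (i, nat (int k + transl \<sigma> i))"
proof -
  obtain N t where Nt: "\<forall>i<n. \<forall>k\<ge>N. 1 \<le> int k + t i \<and> \<sigma> (i, k) = (i, nat (int k + t i))"
    using assms(1) unfolding houghton_def by blast
  then have "transl \<sigma> i = t i"
    using assms(2) by (intro transl_eqI) blast
  then show ?thesis using Nt assms(2) by metis
qed

lemma finite_defects:
  assumes "houghton n \<sigma>" "i < n"
  shows "finite {k. 1 \<le> k \<and> defect \<sigma> i k}"
proof -
  obtain N where N: "\<forall>k\<ge>N. 1 \<le> int k + transl \<sigma> i \<and> \<sigma> (i, k) = (i, nat (int k + transl \<sigma> i))"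
    using houghton_eventually_transl[OF assms] by blast
  have "{k. 1 \<le> k \<and> defect \<sigma> i k} \<subseteq> {..N}"
  proof
    fix k assume "k \<in> {k. 1 \<le> k \<and> defect \<sigma> i k}"
    then show "k \<in> {..N}"
      using N[rule_format, of k] unfolding defect_def by (cases "N \<le> k") auto
  qed
  then show ?thesis using finite_subset by blast
qed

lemma translates_above_pcomp:
  assumes "houghton n \<sigma>" "i < n" "pcomp \<sigma> i < k"
  shows "1 \<le> int k + transl \<sigma> i \<and> \<sigma> (i, k) = (i, nat (int k + transl \<sigma> i))"
proof -
  have "\<not> defect \<sigma> i k"
  proof
    assume defect: "defect \<sigma> i k"
    moreover have "1 \<le> k" using assms(3) by simp
    ultimately have "pcomp \<sigma> i = Max {k. 1 \<le> k \<and> defect \<sigma> i k}"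
      unfolding pcomp_def by auto
    moreover have "k \<le> Max {k. 1 \<le> k \<and> defect \<sigma> i k}"
      using finite_defects[OF assms(1,2)] defect assms(3) by (intro Max_ge) auto
    ultimately show False using assms(3) by simp
  qed
  then show ?thesis unfolding defect_def by auto
qed

lemma pcomp_le:
  assumes "\<And>k. 1 \<le> k \<Longrightarrow> defect \<sigma> i k \<Longrightarrow> k \<le> B"
  shows "pcomp \<sigma> i \<le> B"
proof (cases "\<exists>k\<ge>1. defect \<sigma> i k")
  case True
  have "finite {k. 1 \<le> k \<and> defect \<sigma> i k}"
    by (rule finite_subset[of _ "{..B}"]) (use assms in auto)
  then show ?thesis
    using True assms unfolding pcomp_def by (auto intro: Max.boundedI)
qed (auto simp: pcomp_def)

text \<open>Points with \<open>k + t\<^sub>i(\<sigma>) \<le> 0\<close> are defects, so a negative translation is bounded by \<open>p\<^sub>i\<close>.\<close>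
lemma pcomp_add_transl_nonneg:
  assumes "houghton n \<sigma>" "i < n"
  shows "0 \<le> int (pcomp \<sigma> i) + transl \<sigma> i"
  using translates_above_pcomp[OF assms, of "nat (- transl \<sigma> i)"] by linarith

lemma houghton_fixes_outside: "houghton n \<sigma> \<Longrightarrow> x \<notin> rays n \<Longrightarrow> \<sigma> x = x"
  unfolding houghton_def by blast

lemma houghton_bij:
  assumes "houghton n \<sigma>"
  shows "bij \<sigma>"
proof -
  have "bij_betw \<sigma> (rays n \<union> - rays n) (rays n \<union> - rays n)"
  proof (rule bij_betw_combine)
    show "bij_betw \<sigma> (rays n) (rays n)" using assms unfolding houghton_def by blast
    show "bij_betw \<sigma> (- rays n) (- rays n)"
      using houghton_fixes_outside[OF assms] bij_betw_id by (subst bij_betw_cong[of _ _ id]) auto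
  qed simp
  then show ?thesis by simp
qed

lemma comp_translates_above:
  assumes "houghton n c" "houghton n s" "i < n" "pcomp c i + pcomp s i < k"
  shows "1 \<le> int k + (transl c i + transl s i)
    \<and> (s \<circ> c) (i, k) = (i, nat (int k + (transl c i + transl s i)))"
proof -
  have first: "1 \<le> int k + transl c i \<and> c (i, k) = (i, nat (int k + transl c i))"
    using translates_above_pcomp[OF assms(1,3)] assms(4) by simp
  have "pcomp s i < nat (int k + transl c i)"
    using assms(4) pcomp_add_transl_nonneg[OF assms(1,3)] by linarith
  then have "1 \<le> int (nat (int k + transl c i)) + transl s i
      \<and> s (i, nat (int k + transl c i)) = (i, nat (int (nat (int k + transl c i)) + transl s i))"
    by (rule translates_above_pcomp[OF assms(2,3)])
  with first show ?thesis by (simp add: add.assoc)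
qed

lemma transl_comp:
  assumes "houghton n c" "houghton n s" "i < n"
  shows "transl (s \<circ> c) i = transl c i + transl s i"
  using comp_translates_above[OF assms] by (intro transl_eqI[of "Suc (pcomp c i + pcomp s i)"]) auto

lemma pcomp_comp_le:
  assumes "houghton n c" "houghton n s" "i < n"
  shows "pcomp (s \<circ> c) i \<le> pcomp c i + pcomp s i"
proof (rule pcomp_le)
  fix k assume "1 \<le> k" "defect (s \<circ> c) i k"
  then show "k \<le> pcomp c i + pcomp s i"
    using comp_translates_above[OF assms, of k] transl_comp[OF assms] unfolding defect_def by force
qed

lemma houghton_comp:
  assumes "houghton n c" "houghton n s"
  shows "houghton n (s \<circ> c)"
  unfolding houghton_def
proof (intro conjI allI impI)
  show "bij_betw (s \<circ> c) (rays n) (rays n)"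
    using assms unfolding houghton_def by (meson bij_betw_trans)
  show "(s \<circ> c) x = x" if "x \<notin> rays n" for x
    using that houghton_fixes_outside[OF assms(1)] houghton_fixes_outside[OF assms(2)] by simp
  define N where "N = Suc (\<Sum>i<n. pcomp c i + pcomp s i)"
  have "1 \<le> int k + (transl c i + transl s i)
      \<and> (s \<circ> c) (i, k) = (i, nat (int k + (transl c i + transl s i)))"
    if i: "i < n" and k: "N \<le> k" for i k
  proof (rule comp_translates_above[OF assms i])
    have "pcomp c i + pcomp s i \<le> (\<Sum>i<n. pcomp c i + pcomp s i)"
      using i by (intro member_le_sum) auto
    then show "pcomp c i + pcomp s i < k" using k unfolding N_def by simp
  qed
  then show "\<exists>N t. \<forall>i<n. \<forall>k\<ge>N. 1 \<le> int k + t i \<and> (s \<circ> c) (i, k) = (i, nat (int k + t i))"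
    by (intro exI[of _ N] exI[of _ "\<lambda>i. transl c i + transl s i"]) blast
qed

lemma houghton_inv:
  assumes hs: "houghton n s"
  shows "houghton n (inv s)"
  unfolding houghton_def
proof (intro conjI allI impI)
  have b: "bij_betw s (rays n) (rays n)" using hs unfolding houghton_def by blast
  have inv_f: "inv s (s x) = x" for x using inv_f_f[OF bij_is_inj[OF houghton_bij[OF hs]]] .
  have "inv_into (rays n) s y = inv s y" if "y \<in> rays n" for y
  proof -
    have "y \<in> s ` rays n" using that b by (simp add: bij_betw_def)
    then obtain x where "x \<in> rays n" "y = s x" by blast
    then show ?thesis using b inv_f by (simp add: bij_betw_imp_inj_on)
  qed
  then have "bij_betw (inv s) (rays n) (rays n) = bij_betw (inv_into (rays n) s) (rays n) (rays n)"
    by (intro bij_betw_cong) simp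
  then show "bij_betw (inv s) (rays n) (rays n)"
    using bij_betw_inv_into[OF b] by simp
  show "inv s x = x" if "x \<notin> rays n" for x
    using inv_f[of x] houghton_fixes_outside[OF hs that] by simp
  define N where "N = Suc (\<Sum>i<n. pcomp s i + nat (transl s i))"
  have "1 \<le> int k + - transl s i \<and> inv s (i, k) = (i, nat (int k + - transl s i))"
    if i: "i < n" and k: "N \<le> k" for i k
  proof -
    have "pcomp s i + nat (transl s i) \<le> (\<Sum>i<n. pcomp s i + nat (transl s i))"
      using i by (intro member_le_sum) auto
    then have "pcomp s i + nat (transl s i) < N" unfolding N_def by simp
    then have less: "pcomp s i < nat (int k - transl s i)" using k by linarith
    then have pos: "1 \<le> int k - transl s i" by linarith
    have "s (i, nat (int k - transl s i)) = (i, k)"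
      using translates_above_pcomp[OF hs i less] pos by simp
    then show ?thesis using inv_f[of "(i, nat (int k - transl s i))"] pos by simp
  qed
  then show "\<exists>N t. \<forall>i<n. \<forall>k\<ge>N. 1 \<le> int k + t i \<and> inv s (i, k) = (i, nat (int k + t i))"
    by (intro exI[of _ N] exI[of _ "\<lambda>i. - transl s i"]) blast
qed

lemma houghton_id: "houghton n id"
  unfolding houghton_def by (auto intro!: exI[of _ "\<lambda>i. 0"] exI[of _ 1])

lemma complexity_id: "complexity n id = 0"
proof -
  have "transl id i = 0" for i by (rule transl_eqI[of 1]) auto
  then have "pcomp id i = 0" for i by (intro le_0_eq[THEN iffD1] pcomp_le) (auto simp: defect_def)
  then show ?thesis unfolding complexity_def by simp
qed

lemma complexity_comp_le:
  assumes "houghton n c" "houghton n s"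
  shows "complexity n (s \<circ> c) \<le> complexity n c + complexity n s"
  unfolding complexity_def sum.distrib[symmetric]
  by (rule sum_mono) (use pcomp_comp_le[OF assms] in auto)

section \<open>Words in the elementary pushes\<close>

lemma word_prod_append: "word_prod (xs @ ys) = word_prod ys \<circ> word_prod xs"
proof -
  have "foldl (\<lambda>acc s. s \<circ> acc) a ys = foldl (\<lambda>acc s. s \<circ> acc) id ys \<circ> a" for a :: perm
  proof (induction ys arbitrary: a)
    case (Cons y ys)
    then show ?case by (metis comp_assoc foldl_Cons fun.map_id)
  qed simp
  then show ?thesis unfolding word_prod_def foldl_append by blast
qed

lemma word_prod_Nil [simp]: "word_prod [] = id"
  and word_prod_single [simp]: "word_prod [s] = s"
  unfolding word_prod_def by simp_all

lemma word_prod_Cons: "word_prod (s # ws) = word_prod ws \<circ> s"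
  using word_prod_append[of "[s]" ws] by simp

lemma houghton_word_prod:
  assumes "\<And>s. s \<in> set ws \<Longrightarrow> houghton n s"
  shows "houghton n (word_prod ws)"
  using assms by (induction ws) (simp_all add: word_prod_Cons houghton_id houghton_comp)

lemma complexity_word_prod_le:
  assumes "\<And>s. s \<in> set ws \<Longrightarrow> houghton n s \<and> complexity n s \<le> c"
  shows "complexity n (word_prod ws) \<le> length ws * c"
  using assms
proof (induction ws)
  case (Cons s ws)
  have "complexity n (word_prod (s # ws)) \<le> complexity n s + complexity n (word_prod ws)"
    unfolding word_prod_Cons using Cons.prems by (intro complexity_comp_le houghton_word_prod) auto
  moreover have "complexity n s \<le> c" "complexity n (word_prod ws) \<le> length ws * c"
    using Cons by auto
  ultimately show ?case by simp
qed (simp add: complexity_id)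

text \<open>For \<open>i \<noteq> j\<close>, \<open>push i j\<close> moves the first point of ray \<open>i\<close> to the start of ray \<open>j\<close>,
  shifting ray \<open>i\<close> down and ray \<open>j\<close> up by one. Words in these elements are encoded as lists
  of index pairs.\<close>
definition push :: "nat \<Rightarrow> nat \<Rightarrow> perm" where
  "push i j x = (if x = (i, 1) then (j, 1) else if fst x = i \<and> 2 \<le> snd x then (i, snd x - 1)
     else if fst x = j \<and> 1 \<le> snd x then (j, snd x + 1) else x)"

definition push_letters :: "nat \<Rightarrow> (nat \<times> nat) set" where
  "push_letters n = {(i, j). i < n \<and> j < n \<and> i \<noteq> j}"

definition push_word :: "(nat \<times> nat) list \<Rightarrow> perm" where
  "push_word ws = word_prod (map (\<lambda>(i, j). push i j) ws)"

definition inverse_word :: "(nat \<times> nat) list \<Rightarrow> (nat \<times> nat) list" where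
  "inverse_word ws = rev (map prod.swap ws)"

lemma push_inverse: "i \<noteq> j \<Longrightarrow> push j i (push i j x) = x"
  and push_fixes_base: "snd x = 0 \<Longrightarrow> push i j x = x"
  and push_other: "fst x \<noteq> i \<Longrightarrow> fst x \<noteq> j \<Longrightarrow> push i j x = x"
  and push_first: "push i j (i, 1) = (j, 1)"
  and push_source: "2 \<le> k \<Longrightarrow> push i j (i, k) = (i, k - 1)"
  and push_target: "i \<noteq> j \<Longrightarrow> 1 \<le> k \<Longrightarrow> push i j (j, k) = (j, k + 1)"
  unfolding push_def by (cases x; auto)+

lemma houghton_push:
  assumes "i < n" "j < n" "i \<noteq> j"
  shows "houghton n (push i j)"
  unfolding houghton_def
proof (intro conjI allI impI)
  have "push a b x \<in> rays n" if "x \<in> rays n" "a < n" "b < n" for a b x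
    using that unfolding push_def rays_def by (cases x) auto
  then show "bij_betw (push i j) (rays n) (rays n)"
    using assms push_inverse by (intro bij_betw_byWitness[of _ "push j i"]) auto
  show "push i j x = x" if "x \<notin> rays n" for x
    using that assms unfolding push_def rays_def by (cases x) auto
  show "\<exists>N t. \<forall>a<n. \<forall>k\<ge>N. 1 \<le> int k + t a \<and> push i j (a, k) = (a, nat (int k + t a))"
    using assms(3) unfolding push_def
    by (intro exI[of _ 2] exI[of _ "\<lambda>a. if a = i then -1 else if a = j then 1 else 0"]) auto
qed

lemma push_word_Nil [simp]: "push_word [] = id"
  and push_word_append [simp]: "push_word (xs @ ys) = push_word ys \<circ> push_word xs"
  and push_word_Cons: "push_word ((i, j) # ys) = push_word ys \<circ> push i j"
  unfolding push_word_def by (simp_all add: word_prod_append word_prod_Cons)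

lemma push_word_fixes_base: "snd x = 0 \<Longrightarrow> push_word ws x = x"
  by (induction ws arbitrary: x) (auto simp: push_word_Cons push_fixes_base)

lemma push_word_inverse_word_left:
  assumes "set ws \<subseteq> push_letters n"
  shows "push_word (inverse_word ws) (push_word ws x) = x"
  using assms
proof (induction ws arbitrary: x)
  case (Cons a ws)
  obtain i j where a: "a = (i, j)" by (cases a)
  with Cons show ?case
    by (simp add: inverse_word_def push_word_Cons push_inverse push_letters_def)
qed (simp add: inverse_word_def)

lemma inverse_word_letters: "set ws \<subseteq> push_letters n \<Longrightarrow> set (inverse_word ws) \<subseteq> push_letters n"
  unfolding inverse_word_def push_letters_def by auto

lemma push_word_inverse_word_right:
  assumes "set ws \<subseteq> push_letters n"
  shows "push_word ws (push_word (inverse_word ws) x) = x"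
  using push_word_inverse_word_left[OF inverse_word_letters[OF assms]]
  by (simp add: inverse_word_def rev_map)

lemma bij_push_word: "set ws \<subseteq> push_letters n \<Longrightarrow> bij (push_word ws)"
  by (rule bij_betw_byWitness[of _ "push_word (inverse_word ws)"])
    (simp_all add: push_word_inverse_word_left push_word_inverse_word_right)

lemma length_inverse_word [simp]: "length (inverse_word ws) = length ws"
  unfolding inverse_word_def by simp

section \<open>Draining the irregular part of each ray onto ray 0\<close>

definition drain_word :: "(nat \<Rightarrow> nat) \<Rightarrow> nat list \<Rightarrow> (nat \<times> nat) list" where
  "drain_word M js = concat (map (\<lambda>i. replicate (M i) (i, 0)) js)"

lemma push_word_replicate:
  assumes "i \<noteq> 0"
  shows "1 \<le> j \<Longrightarrow> push_word (replicate m (i, 0)) (i, m + j) = (i, j)"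
    and "1 \<le> k \<Longrightarrow> push_word (replicate m (i, 0)) (0, k) = (0, k + m)"
    and "fst x \<noteq> i \<Longrightarrow> fst x \<noteq> 0 \<Longrightarrow> push_word (replicate m (i, 0)) x = x"
proof (induction m arbitrary: j k)
  case (Suc m)
  { case 1 then show ?case using Suc.IH(1) by (simp add: push_word_Cons push_source) }
  { case 2
    then show ?case using Suc.IH(2)[of "k + 1"] assms by (simp add: push_word_Cons push_target) }
  { case 3 then show ?case using Suc.IH(3) by (simp add: push_word_Cons push_other) }
qed simp_all

lemma drain_word_Cons: "drain_word M (a # js) = replicate (M a) (a, 0) @ drain_word M js"
  unfolding drain_word_def by simp

lemma drain_word_fixes:
  assumes "fst x \<notin> set js" "fst x \<noteq> 0" "0 \<notin> set js"
  shows "push_word (drain_word M js) x = x"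
  using assms
  by (induction js) (auto simp: drain_word_def push_word_replicate(3))

lemma drain_word_base:
  assumes "0 \<notin> set js" "1 \<le> k"
  shows "push_word (drain_word M js) (0, k) = (0, k + sum_list (map M js))"
  using assms
  by (induction js arbitrary: k) (auto simp: drain_word_def push_word_replicate(2) add.assoc)

lemma drain_word_ray:
  assumes "distinct js" "0 \<notin> set js" "i \<in> set js" "1 \<le> j"
  shows "push_word (drain_word M js) (i, M i + j) = (i, j)"
  using assms
proof (induction js)
  case (Cons a js)
  show ?case
  proof (cases "i = a")
    case True
    with Cons.prems show ?thesis
      by (simp add: drain_word_Cons push_word_replicate(1) drain_word_fixes)
  next
    case False
    moreover have "i \<noteq> 0" using Cons.prems by (cases "i = 0") auto
    ultimately show ?thesis using Cons
      by (auto simp: drain_word_Cons push_word_replicate(3))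
  qed
qed simp

lemma length_drain_word: "length (drain_word M js) = sum_list (map M js)"
  unfolding drain_word_def by (induction js) auto

lemma drain_word_letters: "set js \<subseteq> {1..<n} \<Longrightarrow> set (drain_word M js) \<subseteq> push_letters n"
  unfolding drain_word_def push_letters_def by auto

section \<open>Merging two rays through a third\<close>

text \<open>The position, counted from 1, of the \<open>k\<close>-th occurrence of \<open>c\<close> in \<open>bs\<close>.\<close>
fun nth_pos :: "bool \<Rightarrow> bool list \<Rightarrow> nat \<Rightarrow> nat" where
  "nth_pos c [] k = 0"
| "nth_pos c (b # bs) k =
    (if b = c then (if k = 1 then 1 else nth_pos c bs (k - 1) + 1) else nth_pos c bs k + 1)"

definition positions :: "bool \<Rightarrow> bool list \<Rightarrow> nat set" where
  "positions c bs = {t. 1 \<le> t \<and> t \<le> length bs \<and> bs ! (t - 1) = c}"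

lemma count_list_True_False: "count_list bs True + count_list bs False = length bs"
  by (induction bs) auto

lemma nth_pos_ge1: "1 \<le> k \<Longrightarrow> k \<le> count_list bs c \<Longrightarrow> 1 \<le> nth_pos c bs k"
  by (induction bs arbitrary: k) auto

lemma nth_pos_in_positions:
  "1 \<le> k \<Longrightarrow> k \<le> count_list bs c \<Longrightarrow> nth_pos c bs k \<in> positions c bs"
proof (induction bs arbitrary: k)
  case (Cons b bs)
  show ?case
  proof (cases "b = c \<and> k = 1")
    case False
    then have "nth_pos c bs (if b = c then k - 1 else k) \<in> positions c bs"
      using Cons.prems by (intro Cons.IH) auto
    then show ?thesis using False by (auto simp: positions_def)
  qed (simp add: positions_def)
qed simp

lemma nth_pos_strict_mono:
  "1 \<le> k \<Longrightarrow> k < k' \<Longrightarrow> k' \<le> count_list bs c \<Longrightarrow> nth_pos c bs k < nth_pos c bs k'"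
proof (induction bs arbitrary: k k')
  case (Cons b bs)
  show ?case
  proof (cases "b = c \<and> k = 1")
    case True
    then have "1 \<le> nth_pos c bs (k' - 1)" using Cons.prems by (intro nth_pos_ge1) auto
    then show ?thesis using True Cons.prems by simp
  next
    case False
    then have "nth_pos c bs (if b = c then k - 1 else k)
        < nth_pos c bs (if b = c then k' - 1 else k')"
      using Cons.prems by (intro Cons.IH) auto
    then show ?thesis using False Cons.prems by auto
  qed
qed simp

lemma positions_nth_pos:
  "t \<in> positions c bs \<Longrightarrow> \<exists>k. 1 \<le> k \<and> k \<le> count_list bs c \<and> nth_pos c bs k = t"
proof (induction bs arbitrary: t)
  case (Cons b bs)
  show ?case
  proof (cases "t = 1")
    case True
    with Cons.prems show ?thesis by (intro exI[of _ 1]) (simp add: positions_def)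
  next
    case False
    with Cons.prems have "t - 1 \<in> positions c bs" by (auto simp: positions_def nth_Cons')
    then obtain k where k: "1 \<le> k" "k \<le> count_list bs c" "nth_pos c bs k = t - 1"
      using Cons.IH by blast
    show ?thesis
    proof (cases "b = c")
      case True
      then show ?thesis
        using k False Cons.prems by (intro exI[of _ "k + 1"]) (auto simp: positions_def)
    next
      case False
      then show ?thesis using k \<open>t \<noteq> 1\<close> Cons.prems by (intro exI[of _ k]) (auto simp: positions_def)
    qed
  qed
qed (simp add: positions_def)

lemma bij_betw_nth_pos: "bij_betw (nth_pos c bs) {1..count_list bs c} (positions c bs)"
proof -
  have "inj_on (nth_pos c bs) {1..count_list bs c}"
  proof (rule inj_onI)
    fix x y assume "x \<in> {1..count_list bs c}" "y \<in> {1..count_list bs c}"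
      and "nth_pos c bs x = nth_pos c bs y"
    then show "x = y"
      using nth_pos_strict_mono[of x y bs c] nth_pos_strict_mono[of y x bs c]
      by (cases x y rule: linorder_cases) auto
  qed
  moreover have "nth_pos c bs ` {1..count_list bs c} = positions c bs"
    using nth_pos_in_positions positions_nth_pos by fastforce
  ultimately show ?thesis by (simp add: bij_betw_def)
qed

lemma count_list_replicate [simp]: "count_list (replicate a x) y = (if x = y then a else 0)"
  by (induction a) auto

lemma nth_pos_replicate_split:
  "1 \<le> k \<Longrightarrow> k \<le> a \<Longrightarrow> nth_pos True (replicate a True @ replicate b False) k = k"
  "1 \<le> j \<Longrightarrow> j \<le> b \<Longrightarrow> nth_pos False (replicate a True @ replicate b False) j = a + j"
proof -
  have "1 \<le> j \<Longrightarrow> j \<le> b \<Longrightarrow> nth_pos False (replicate b False) j = j"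
    by (induction b arbitrary: j) auto
  then show "1 \<le> j \<Longrightarrow> j \<le> b \<Longrightarrow> nth_pos False (replicate a True @ replicate b False) j = a + j"
    by (induction a) auto
qed (induction a arbitrary: k; auto)

text \<open>Using ray \<open>v\<close> as a stack, \<open>merge_word r u v bs\<close> interleaves the initial segments of rays
  \<open>r\<close> and \<open>u\<close> onto ray \<open>r\<close>: the \<open>k\<close>-th point of \<open>r\<close> (of \<open>u\<close>) lands at the position of the
  \<open>k\<close>-th \<open>True\<close> (\<open>False\<close>) in \<open>bs\<close>.\<close>
fun merge_word :: "nat \<Rightarrow> nat \<Rightarrow> nat \<Rightarrow> bool list \<Rightarrow> (nat \<times> nat) list" where
  "merge_word r u v [] = []"
| "merge_word r u v (b # bs) = (if b then r else u, v) # merge_word r u v bs @ [(v, r)]"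

lemma length_merge_word: "length (merge_word r u v bs) = 2 * length bs"
  by (induction bs) auto

lemma merge_word_letters:
  "r < n \<Longrightarrow> u < n \<Longrightarrow> v < n \<Longrightarrow> r \<noteq> v \<Longrightarrow> u \<noteq> v \<Longrightarrow> set (merge_word r u v bs) \<subseteq> push_letters n"
  by (induction bs) (auto simp: push_letters_def)

lemma push_word_merge_word_Cons:
  "push_word (merge_word r u v (b # bs)) x
     = push v r (push_word (merge_word r u v bs) (push (if b then r else u) v x))"
  by (simp add: push_word_Cons)

declare merge_word.simps(2) [simp del]

locale three_rays =
  fixes r u v :: nat
  assumes ru: "r \<noteq> u" and rv: "r \<noteq> v" and uv: "u \<noteq> v"
begin

lemma merge_word_fixes_stack: "push_word (merge_word r u v bs) (v, k) = (v, k)"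
proof (induction bs arbitrary: k)
  case (Cons b bs)
  show ?case
  proof (cases "k = 0")
    case False
    then show ?thesis
      using rv uv Cons.IH by (simp add: push_word_merge_word_Cons push_target push_source)
  qed (simp add: push_word_fixes_base)
qed simp

lemma merge_word_fixes:
  assumes "fst x \<noteq> r" "fst x \<noteq> u"
  shows "push_word (merge_word r u v bs) x = x"
proof (cases "fst x = v")
  case True
  then show ?thesis using merge_word_fixes_stack[of bs "snd x"] by (cases x) auto
next
  case False
  with assms show ?thesis
    by (induction bs) (simp_all add: push_word_merge_word_Cons push_other)
qed

lemma merge_word_true:
  "1 \<le> k \<Longrightarrow> k \<le> count_list bs True \<Longrightarrow>
    push_word (merge_word r u v bs) (r, k) = (r, nth_pos True bs k)"
proof (induction bs arbitrary: k)
  case (Cons b bs)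
  show ?case
  proof (cases "b \<and> k = 1")
    case True
    then show ?thesis using push_first[of r v] push_first[of u v] push_first[of v r]
      by (auto simp: push_word_merge_word_Cons merge_word_fixes_stack)
  next
    case False
    define k' where "k' = (if b then k - 1 else k)"
    have k': "1 \<le> k'" "k' \<le> count_list bs True" using Cons.prems False unfolding k'_def by auto
    have "push (if b then r else u) v (r, k) = (r, k')"
      using False Cons.prems ru rv unfolding k'_def by (auto simp: push_source push_other)
    moreover have "1 \<le> nth_pos True bs k'" using k' by (rule nth_pos_ge1)
    ultimately show ?thesis
      using Cons.IH[OF k'] False rv unfolding k'_def
      by (simp add: push_word_merge_word_Cons push_target)
  qed
qed simp

lemma merge_word_false:
  "1 \<le> k \<Longrightarrow> k \<le> count_list bs False \<Longrightarrow>
    push_word (merge_word r u v bs) (u, k) = (r, nth_pos False bs k)"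
proof (induction bs arbitrary: k)
  case (Cons b bs)
  show ?case
  proof (cases "\<not> b \<and> k = 1")
    case True
    then show ?thesis using push_first[of r v] push_first[of u v] push_first[of v r]
      by (auto simp: push_word_merge_word_Cons merge_word_fixes_stack)
  next
    case False
    define k' where "k' = (if b then k else k - 1)"
    have k': "1 \<le> k'" "k' \<le> count_list bs False" using Cons.prems False unfolding k'_def by auto
    have "push (if b then r else u) v (u, k) = (u, k')"
      using False Cons.prems ru uv unfolding k'_def by (auto simp: push_source push_other)
    moreover have "1 \<le> nth_pos False bs k'" using k' by (rule nth_pos_ge1)
    ultimately show ?thesis
      using Cons.IH[OF k'] False rv unfolding k'_def
      by (auto simp: push_word_merge_word_Cons push_target)
  qed
qed simp

lemma merge_word_true_tail:
  "count_list bs True < k \<Longrightarrow>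
    push_word (merge_word r u v bs) (r, k) = (r, k + count_list bs False)"
proof (induction bs arbitrary: k)
  case (Cons b bs)
  with rv ru show ?case
    by (cases b) (simp_all add: push_word_merge_word_Cons push_source push_target push_other)
qed simp

lemma merge_word_false_tail:
  "count_list bs False < k \<Longrightarrow>
    push_word (merge_word r u v bs) (u, k) = (u, k - count_list bs False)"
proof (induction bs arbitrary: k)
  case (Cons b bs)
  with ru uv show ?case
    by (cases b) (simp_all add: push_word_merge_word_Cons push_source push_other)
qed simp

end

section \<open>Permutations of an initial segment of a ray\<close>

definition ray_perm :: "nat \<Rightarrow> (nat \<Rightarrow> nat) \<Rightarrow> nat \<Rightarrow> perm" where
  "ray_perm r f m x = (if fst x = r \<and> 1 \<le> snd x \<and> snd x \<le> m then (r, f (snd x)) else x)"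

lemma ray_perm_trivial:
  assumes "m \<le> 1" "bij_betw f {1..m} {1..m}"
  shows "ray_perm r f m = id"
proof
  fix x
  have "f k = k" if "k \<in> {1..m}" for k
  proof -
    have "k = 1" "m = 1" using that assms(1) by auto
    then show ?thesis using assms(2) bij_betwE by fastforce
  qed
  then show "ray_perm r f m x = id x"
    unfolding ray_perm_def by (cases x) auto
qed

text \<open>The split step of merge sort: \<open>bs\<close> marks with \<open>True\<close> the values that \<open>f\<close> takes
  on \<open>{1..a}\<close>.\<close>
lemma merge_pattern_exists:
  assumes f: "bij_betw f {1..m} {1..m}" and a: "a \<le> m"
  obtains bs fA fB where
    "count_list bs True = a" "count_list bs False = m - a"
    "\<And>k. k \<in> {1..a} \<Longrightarrow> fA k \<in> {1..a} \<and> nth_pos True bs (fA k) = f k"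
    "\<And>j. j \<in> {1..m - a} \<Longrightarrow> fB j \<in> {1..m - a} \<and> nth_pos False bs (fB j) = f (a + j)"
    "bij_betw fA {1..a} {1..a}" "bij_betw fB {1..m - a} {1..m - a}"
proof -
  define E where "E = f ` {1..a}"
  define bs where "bs = map (\<lambda>t. t \<in> E) [1..<m+1]"
  have len: "length bs = m" unfolding bs_def by simp
  have E_sub: "E \<subseteq> {1..m}" using f a unfolding E_def bij_betw_def by auto
  have "bs ! (t - 1) = (t \<in> E)" if "1 \<le> t" "t \<le> m" for t
    unfolding bs_def using that by (subst nth_map) (auto simp del: upt_Suc)
  then have pos_True: "positions True bs = E" and pos_False: "positions False bs = {1..m} - E"
    using E_sub len unfolding positions_def by auto
  have fE: "bij_betw f {1..a} E"
    using f a unfolding E_def bij_betw_def by (auto intro: inj_on_subset)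
  have fE': "bij_betw (\<lambda>j. f (a + j)) {1..m - a} ({1..m} - E)"
  proof -
    have shift: "bij_betw ((+) a) {1..m - a} {a + 1..m}"
      unfolding bij_betw_def using a
      by (auto simp: inj_on_def image_iff intro!: exI[of _ "x - a" for x])
    have "{1..m} - {1..a} = {a + 1..m}" by auto
    then have "f ` {a + 1..m} = {1..m} - E"
      using inj_on_image_set_diff[of f "{1..m}" "{1..m}" "{1..a}"] f a
      unfolding E_def bij_betw_def by auto
    then have "bij_betw f {a + 1..m} ({1..m} - E)"
      using f unfolding bij_betw_def by (auto intro: inj_on_subset)
    from bij_betw_trans[OF shift this] show ?thesis by (simp add: comp_def)
  qed
  have count_True: "count_list bs True = a"
    using bij_betw_same_card[OF bij_betw_nth_pos[of True bs]] bij_betw_same_card[OF fE] pos_True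
    by simp
  have count_False: "count_list bs False = m - a"
    using count_list_True_False[of bs] len count_True by simp
  have nthT: "bij_betw (nth_pos True bs) {1..a} E"
    using bij_betw_nth_pos[of True bs] pos_True count_True by simp
  have nthF: "bij_betw (nth_pos False bs) {1..m - a} ({1..m} - E)"
    using bij_betw_nth_pos[of False bs] pos_False count_False by simp
  define fA where "fA = the_inv_into {1..a} (nth_pos True bs) \<circ> f"
  define fB where "fB = the_inv_into {1..m - a} (nth_pos False bs) \<circ> (\<lambda>j. f (a + j))"
  have fA: "bij_betw fA {1..a} {1..a}"
    unfolding fA_def by (rule bij_betw_trans[OF fE bij_betw_the_inv_into[OF nthT]])
  have fB: "bij_betw fB {1..m - a} {1..m - a}"
    unfolding fB_def by (rule bij_betw_trans[OF fE' bij_betw_the_inv_into[OF nthF]])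
  show thesis
  proof (rule that[OF count_True count_False _ _ fA fB])
    show "fA k \<in> {1..a} \<and> nth_pos True bs (fA k) = f k" if "k \<in> {1..a}" for k
      using that bij_betwE[OF fA] bij_betwE[OF fE] f_the_inv_into_f_bij_betw[OF nthT]
      unfolding fA_def by auto
    show "fB j \<in> {1..m - a} \<and> nth_pos False bs (fB j) = f (a + j)" if "j \<in> {1..m - a}" for j
      using that bij_betwE[OF fB] bij_betwE[OF fE'] f_the_inv_into_f_bij_betw[OF nthF]
      unfolding fB_def by auto
  qed
qed

text \<open>Permuting the two rays separately and then merging them according to \<open>bs\<close> has the same
  effect as first merging them trivially and then applying \<open>f\<close>.\<close>
lemma (in three_rays) merge_word_ray_perm:
  assumes T: "count_list bs True = a" and F: "count_list bs False = b"
    and fA: "\<And>k. k \<in> {1..a} \<Longrightarrow> fA k \<in> {1..a} \<and> nth_pos True bs (fA k) = f k"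
    and fB: "\<And>j. j \<in> {1..b} \<Longrightarrow> fB j \<in> {1..b} \<and> nth_pos False bs (fB j) = f (a + j)"
  shows "push_word (merge_word r u v bs) (ray_perm u fB b (ray_perm r fA a y))
       = ray_perm r f (a + b)
           (push_word (merge_word r u v (replicate a True @ replicate b False)) y)"
proof -
  let ?M = "push_word (merge_word r u v bs)"
  let ?M' = "push_word (merge_word r u v (replicate a True @ replicate b False))"
  obtain w k where y: "y = (w, k)" by (cases y)
  consider "k = 0" | "k \<noteq> 0" "w = r" "k \<le> a" | "w = r" "a < k" | "k \<noteq> 0" "w = u" "k \<le> b"
    | "w = u" "b < k" | "w \<noteq> r" "w \<noteq> u"
    by (metis not_le)
  then show ?thesis
  proof cases
    case 1
    then show ?thesis unfolding y by (simp add: ray_perm_def push_word_fixes_base)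
  next
    case 2
    then have "?M' (r, k) = (r, k)"
      by (simp add: merge_word_true count_list_replicate nth_pos_replicate_split)
    moreover have "?M (r, fA k) = (r, f k)"
      using 2 fA[of k] T by (simp add: merge_word_true)
    ultimately show ?thesis using 2 ru unfolding y by (simp add: ray_perm_def)
  next
    case 3
    then have "?M' (r, k) = (r, k + b)"
      by (simp add: merge_word_true_tail count_list_replicate)
    moreover have "?M (r, k) = (r, k + b)"
      using 3 T F by (simp add: merge_word_true_tail)
    ultimately show ?thesis using 3 ru unfolding y by (simp add: ray_perm_def)
  next
    case 4
    then have "?M' (u, k) = (r, a + k)"
      by (simp add: merge_word_false count_list_replicate nth_pos_replicate_split)
    moreover have "?M (u, fB k) = (r, f (a + k))"
      using 4 fB[of k] F by (simp add: merge_word_false)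
    ultimately show ?thesis using 4 ru unfolding y by (simp add: ray_perm_def)
  next
    case 5
    then have "?M' (u, k) = (u, k - b)"
      by (simp add: merge_word_false_tail count_list_replicate)
    moreover have "?M (u, k) = (u, k - b)"
      using 5 F by (simp add: merge_word_false_tail)
    ultimately show ?thesis using 5 ru unfolding y by (simp add: ray_perm_def)
  next
    case 6
    then show ?thesis unfolding y by (simp add: ray_perm_def merge_word_fixes)
  qed
qed

lemma ray_perm_merge_step:
  assumes "three_rays r u v" "r < n" "u < n" "v < n"
    and f: "bij_betw f {1..m} {1..m}" and a: "a \<le> m"
    and perm_r: "\<And>g. bij_betw g {1..a} {1..a} \<Longrightarrow>
      \<exists>ws. set ws \<subseteq> push_letters n \<and> length ws \<le> La \<and> push_word ws = ray_perm r g a"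
    and perm_u: "\<And>g. bij_betw g {1..m - a} {1..m - a} \<Longrightarrow>
      \<exists>ws. set ws \<subseteq> push_letters n \<and> length ws \<le> Lb \<and> push_word ws = ray_perm u g (m - a)"
  shows "\<exists>ws. set ws \<subseteq> push_letters n \<and> length ws \<le> La + Lb + 4 * m
    \<and> push_word ws = ray_perm r f m"
proof -
  interpret three_rays r u v by fact
  obtain bs fA fB where T: "count_list bs True = a" and F: "count_list bs False = m - a"
    and fA: "\<And>k. k \<in> {1..a} \<Longrightarrow> fA k \<in> {1..a} \<and> nth_pos True bs (fA k) = f k"
    and fB: "\<And>j. j \<in> {1..m - a} \<Longrightarrow> fB j \<in> {1..m - a} \<and> nth_pos False bs (fB j) = f (a + j)"
    and fA_bij: "bij_betw fA {1..a} {1..a}" and fB_bij: "bij_betw fB {1..m - a} {1..m - a}"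
    using merge_pattern_exists[OF f a] by metis
  obtain wsA where wsA: "set wsA \<subseteq> push_letters n" "length wsA \<le> La"
      "push_word wsA = ray_perm r fA a"
    using perm_r[OF fA_bij] by blast
  obtain wsB where wsB: "set wsB \<subseteq> push_letters n" "length wsB \<le> Lb"
      "push_word wsB = ray_perm u fB (m - a)"
    using perm_u[OF fB_bij] by blast
  define w0 where "w0 = merge_word r u v (replicate a True @ replicate (m - a) False)"
  define ws where "ws = inverse_word w0 @ wsA @ wsB @ merge_word r u v bs"
  have w0: "set w0 \<subseteq> push_letters n"
    unfolding w0_def using assms(2-4) rv uv by (intro merge_word_letters)
  have "set ws \<subseteq> push_letters n"
    unfolding ws_def using inverse_word_letters[OF w0] wsA wsB assms(2-4) rv uv
    by (auto dest: merge_word_letters[of r n u v bs])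
  moreover have "length ws \<le> La + Lb + 4 * m"
    unfolding ws_def w0_def using wsA wsB a count_list_True_False[of bs] T F
    by (simp add: length_merge_word)
  moreover have "push_word ws x = ray_perm r f m x" for x
  proof -
    have "push_word ws x = push_word (merge_word r u v bs)
        (ray_perm u fB (m - a) (ray_perm r fA a (push_word (inverse_word w0) x)))"
      unfolding ws_def using wsA(3) wsB(3) by simp
    also have "\<dots> = ray_perm r f m (push_word w0 (push_word (inverse_word w0) x))"
      unfolding w0_def
      using merge_word_ray_perm[where a = a and b = "m - a" and f = f and fA = fA and fB = fB,
          OF T F fA fB] a
      by simp
    also have "\<dots> = ray_perm r f m x"
      using push_word_inverse_word_right[OF w0] by simp
    finally show ?thesis .
  qed
  ultimately show ?thesis by blast
qed

text \<open>Merge sort: the two halves are sorted on rays \<open>r\<close> and \<open>u\<close>, then merged back onto \<open>r\<close>.\<close>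
lemma ray_perm_word:
  assumes "m \<le> 2 ^ k" "three_rays r u v" "r < n" "u < n" "v < n" "bij_betw f {1..m} {1..m}"
  shows "\<exists>ws. set ws \<subseteq> push_letters n \<and> length ws \<le> 4 * m * k \<and> push_word ws = ray_perm r f m"
  using assms
proof (induction k arbitrary: m f r u)
  case 0
  then have "ray_perm r f m = id" by (intro ray_perm_trivial) auto
  then show ?case by (intro exI[of _ "[]"]) simp
next
  case (Suc k)
  define a where "a = m div 2"
  have a: "a \<le> 2 ^ k" "m - a \<le> 2 ^ k" "a \<le> m" unfolding a_def using Suc.prems(1) by auto
  have "three_rays u r v" using Suc.prems(2) unfolding three_rays_def by auto
  then have "\<exists>ws. set ws \<subseteq> push_letters n \<and> length ws \<le> 4 * a * k + 4 * (m - a) * k + 4 * m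
      \<and> push_word ws = ray_perm r f m"
    using Suc.prems a Suc.IH[where m = a and r = r and u = u]
      Suc.IH[where m = "m - a" and r = u and u = r]
    by (intro ray_perm_merge_step[of r u v]) auto
  moreover have "4 * a * k + 4 * (m - a) * k + 4 * m = 4 * m * Suc k"
    using a(3) by (simp add: algebra_simps)
  ultimately show ?case by simp
qed

section \<open>Reduction to a permutation of an initial segment of ray 0\<close>

lemma bij_shift_off_segment:
  assumes bij: "bij \<pi>"
    and off: "\<And>x. \<not> (fst x = r \<and> 1 \<le> snd x \<and> snd x \<le> P) \<Longrightarrow>
      \<pi> x = (if fst x = r \<and> P < snd x then (r, T + (snd x - P)) else x)"
  shows "T = P" and "\<exists>f. bij_betw f {1..P} {1..P} \<and> \<pi> = ray_perm r f P"
proof -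
  define Z where "Z = Pair r ` {1..P}"
  define Z' where "Z' = Pair r ` {1..T}"
  have "\<pi> ` (- Z) = - Z'"
  proof (intro equalityI subsetI)
    fix y assume "y \<in> \<pi> ` (- Z)"
    then obtain w k where "(w, k) \<notin> Z" and y: "y = \<pi> (w, k)" by auto
    then have "\<not> (w = r \<and> 1 \<le> k \<and> k \<le> P)" unfolding Z_def by auto
    then show "y \<in> - Z'" using off[of "(w, k)"] y unfolding Z'_def by (auto split: if_splits)
  next
    fix y assume y: "y \<in> - Z'"
    obtain w k where y_wk: "y = (w, k)" by (cases y)
    show "y \<in> \<pi> ` (- Z)"
    proof (cases "w = r \<and> 1 \<le> k")
      case True
      then have "T < k" using y y_wk unfolding Z'_def by auto
      define x where "x = (r, P + (k - T))"
      have "x \<notin> Z" unfolding x_def Z_def using \<open>T < k\<close> by auto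
      moreover have "\<not> (fst x = r \<and> 1 \<le> snd x \<and> snd x \<le> P)"
        unfolding x_def using \<open>T < k\<close> by auto
      then have "\<pi> x = y" using off[of x] \<open>T < k\<close> y_wk True unfolding x_def by auto
      ultimately show ?thesis by (intro rev_image_eqI[of x]) auto
    next
      case False
      then have "y \<notin> Z" "\<pi> y = y" using off[of y] y_wk unfolding Z_def by auto
      then show ?thesis by (intro rev_image_eqI[of y]) auto
    qed
  qed
  then have image_Z: "\<pi> ` Z = Z'"
    using bij_image_Compl_eq[OF bij, of Z] by simp
  have "card (\<pi> ` Z) = card Z"
    using bij by (intro card_image) (auto simp: bij_def intro: inj_on_subset)
  then show T_eq: "T = P"
    using image_Z unfolding Z_def Z'_def by (simp add: card_image inj_on_def)
  define f where "f k = snd (\<pi> (r, k))" for k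
  have \<pi>_segment: "\<pi> (r, k) = (r, f k) \<and> f k \<in> {1..P}" if "k \<in> {1..P}" for k
  proof -
    have "\<pi> (r, k) \<in> Z" using image_Z T_eq that unfolding Z_def Z'_def by blast
    then show ?thesis unfolding Z_def f_def by auto
  qed
  have "inj_on f {1..P}"
  proof (rule inj_onI)
    fix a b assume "a \<in> {1..P}" "b \<in> {1..P}" "f a = f b"
    then have "\<pi> (r, a) = \<pi> (r, b)" using \<pi>_segment by metis
    then show "a = b" using bij by (auto simp: bij_def dest: injD)
  qed
  moreover have "f ` {1..P} = {1..P}"
  proof
    show "f ` {1..P} \<subseteq> {1..P}" using \<pi>_segment by auto
    show "{1..P} \<subseteq> f ` {1..P}"
    proof
      fix y assume "y \<in> {1..P}"
      then have "(r, y) \<in> \<pi> ` Z" using image_Z T_eq unfolding Z'_def by auto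
      then obtain k where "k \<in> {1..P}" "\<pi> (r, k) = (r, y)" unfolding Z_def by auto
      then show "y \<in> f ` {1..P}" using \<pi>_segment by force
    qed
  qed
  moreover have "\<pi> x = ray_perm r f P x" for x
  proof (cases "fst x = r \<and> 1 \<le> snd x \<and> snd x \<le> P")
    case True
    then show ?thesis using \<pi>_segment[of "snd x"] unfolding ray_perm_def by (cases x) auto
  next
    case False
    then show ?thesis using off[of x] T_eq unfolding ray_perm_def by (cases x) auto
  qed
  ultimately show "\<exists>f. bij_betw f {1..P} {1..P} \<and> \<pi> = ray_perm r f P"
    unfolding bij_betw_def by blast
qed

lemma inverse_drain_word:
  fixes M :: "nat \<Rightarrow> nat"
  assumes "0 < n"
  defines "Gi \<equiv> push_word (inverse_word (drain_word M [1..<n]))"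
  shows "1 \<le> i \<Longrightarrow> i < n \<Longrightarrow> 1 \<le> j \<Longrightarrow> Gi (i, j) = (i, M i + j)"
    and "1 \<le> j \<Longrightarrow> Gi (0, sum_list (map M [1..<n]) + j) = (0, j)"
    and "n \<le> fst x \<or> snd x = 0 \<Longrightarrow> Gi x = x"
proof -
  have Gi_G: "Gi (push_word (drain_word M [1..<n]) y) = y" for y
    unfolding Gi_def by (rule push_word_inverse_word_left[of _ n]) (simp add: drain_word_letters)
  show "Gi (i, j) = (i, M i + j)" if "1 \<le> i" "i < n" "1 \<le> j"
    using Gi_G[of "(i, M i + j)"] drain_word_ray[of "[1..<n]" i j M] that by simp
  show "Gi (0, sum_list (map M [1..<n]) + j) = (0, j)" if "1 \<le> j"
    using Gi_G[of "(0, j)"] drain_word_base[of "[1..<n]" j M] that by (simp add: add.commute)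
  show "Gi x = x" if "n \<le> fst x \<or> snd x = 0"
  proof -
    have "push_word (drain_word M [1..<n]) x = x"
      using that assms(1) by (auto intro: drain_word_fixes push_word_fixes_base)
    then show ?thesis using Gi_G[of x] by simp
  qed
qed

text \<open>Pushing the first \<open>p\<^sub>i(\<sigma>)\<close> points of every ray \<open>i \<noteq> 0\<close> onto ray 0 before \<open>\<sigma>\<close>, and the
  corresponding image points back afterwards, leaves a permutation of the first \<open>P(\<sigma>)\<close> points
  of ray 0.\<close>
lemma drain_conj_ray_perm:
  assumes h: "houghton n \<sigma>" and n: "0 < n"
  defines "M \<equiv> pcomp \<sigma>" and "M' \<equiv> \<lambda>i. nat (int (pcomp \<sigma> i) + transl \<sigma> i)"
  shows "length (drain_word M' [1..<n]) \<le> complexity n \<sigma>"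
    and "\<exists>f. bij_betw f {1..complexity n \<sigma>} {1..complexity n \<sigma>} \<and>
      push_word (drain_word M' [1..<n]) \<circ> \<sigma> \<circ> push_word (inverse_word (drain_word M [1..<n]))
        = ray_perm 0 f (complexity n \<sigma>)"
proof -
  define P where "P = complexity n \<sigma>"
  define T where "T = M' 0 + sum_list (map M' [1..<n])"
  define Gi where "Gi = push_word (inverse_word (drain_word M [1..<n]))"
  define G' where "G' = push_word (drain_word M' [1..<n])"
  note Gi = inverse_drain_word[OF n, where M = M, folded Gi_def]
  have P_eq: "P = M 0 + sum_list (map M [1..<n])"
  proof -
    have "{..<n} = insert 0 {1..<n}" using n by auto
    then show ?thesis
      unfolding P_def complexity_def M_def by (simp add: sum_list_distinct_conv_sum_set)
  qed
  have \<sigma>_ray: "\<sigma> (i, M i + j) = (i, M' i + j)" if "i < n" "1 \<le> j" for i j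
    using translates_above_pcomp[OF h that(1), of "M i + j"] pcomp_add_transl_nonneg[OF h that(1)]
      that unfolding M_def M'_def by (simp add: nat_add_distrib)
  define \<pi> where "\<pi> = G' \<circ> \<sigma> \<circ> Gi"
  have letters: "set (drain_word K [1..<n]) \<subseteq> push_letters n" for K
    by (simp add: drain_word_letters)
  have "bij Gi" "bij G'"
    unfolding Gi_def G'_def by (intro bij_push_word[of _ n] inverse_word_letters letters)+
  then have bij: "bij \<pi>"
    unfolding \<pi>_def using houghton_bij[OF h] by (intro bij_comp)
  have off: "\<pi> x = (if fst x = 0 \<and> P < snd x then (0, T + (snd x - P)) else x)"
    if off: "\<not> (fst x = 0 \<and> 1 \<le> snd x \<and> snd x \<le> P)" for x
  proof -
    obtain w k where x: "x = (w, k)" by (cases x)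
    consider "n \<le> w \<or> k = 0" | "1 \<le> w" "w < n" "1 \<le> k" | "w = 0" "P < k"
      using off x by (cases "w = 0"; cases "n \<le> w"; cases "k = 0") auto
    then show ?thesis
    proof cases
      case 1
      then have "Gi x = x" "\<sigma> x = x" "G' x = x"
        using Gi(3) houghton_fixes_outside[OF h] drain_word_fixes push_word_fixes_base n x
        unfolding G'_def rays_def by auto
      then show ?thesis using 1 n x unfolding \<pi>_def by auto
    next
      case 2
      then show ?thesis
        using Gi(1)[of w k] \<sigma>_ray[of w k] drain_word_ray[of "[1..<n]" w k M'] x
        unfolding \<pi>_def G'_def by simp
    next
      case 3
      then have "Gi x = (0, M 0 + (k - P))"
        using Gi(2)[of "M 0 + (k - P)"] P_eq x by (simp add: add.commute add.left_commute)
      then show ?thesis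
        using 3 \<sigma>_ray[of 0 "k - P"] drain_word_base[of "[1..<n]" "M' 0 + (k - P)" M'] n x
        unfolding \<pi>_def G'_def T_def by simp
    qed
  qed
  obtain f where "bij_betw f {1..P} {1..P}" "\<pi> = ray_perm 0 f P"
    using bij_shift_off_segment(2)[OF bij off] by blast
  then show "\<exists>f. bij_betw f {1..complexity n \<sigma>} {1..complexity n \<sigma>} \<and>
      push_word (drain_word M' [1..<n]) \<circ> \<sigma> \<circ> push_word (inverse_word (drain_word M [1..<n]))
        = ray_perm 0 f (complexity n \<sigma>)"
    unfolding \<pi>_def G'_def Gi_def P_def by blast
  show "length (drain_word M' [1..<n]) \<le> complexity n \<sigma>"
    using bij_shift_off_segment(1)[OF bij off] unfolding T_def P_def
    by (simp add: length_drain_word)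
qed

lemma houghton_push_word:
  assumes n: "3 \<le> n" and h: "houghton n \<sigma>" and k: "complexity n \<sigma> \<le> 2 ^ k"
  shows "\<exists>ws. set ws \<subseteq> push_letters n \<and>
    length ws \<le> 2 * complexity n \<sigma> + 4 * complexity n \<sigma> * k \<and> push_word ws = \<sigma>"
proof -
  define P where "P = complexity n \<sigma>"
  define wG where "wG = drain_word (pcomp \<sigma>) [1..<n]"
  define wG' where "wG' = drain_word (\<lambda>i. nat (int (pcomp \<sigma> i) + transl \<sigma> i)) [1..<n]"
  have letters: "set wG \<subseteq> push_letters n" "set wG' \<subseteq> push_letters n"
    unfolding wG_def wG'_def by (simp_all add: drain_word_letters)
  obtain f where f: "bij_betw f {1..P} {1..P}"
    and conj: "push_word wG' \<circ> \<sigma> \<circ> push_word (inverse_word wG) = ray_perm 0 f P"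
    using drain_conj_ray_perm(2)[OF h] n unfolding P_def wG_def wG'_def by auto
  obtain w\<pi> where w\<pi>: "set w\<pi> \<subseteq> push_letters n" "length w\<pi> \<le> 4 * P * k"
    "push_word w\<pi> = ray_perm 0 f P"
    using ray_perm_word[of P k 0 1 2 n f] k f n unfolding P_def three_rays_def by auto
  define ws where "ws = wG @ w\<pi> @ inverse_word wG'"
  have "length wG \<le> P"
    unfolding P_def wG_def complexity_def
    by (simp add: length_drain_word sum_list_distinct_conv_sum_set) (intro sum_mono2; auto)
  moreover have "length wG' \<le> P"
    using drain_conj_ray_perm(1)[OF h] n unfolding P_def wG'_def by simp
  ultimately have "length ws \<le> 2 * P + 4 * P * k"
    using w\<pi>(2) unfolding ws_def by simp
  moreover have "set ws \<subseteq> push_letters n"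
    unfolding ws_def using letters w\<pi>(1) inverse_word_letters[OF letters(2)] by auto
  moreover have "push_word ws x = \<sigma> x" for x
  proof -
    have "push_word ws x = push_word (inverse_word wG') (ray_perm 0 f P (push_word wG x))"
      unfolding ws_def using w\<pi>(3) by simp
    also have "\<dots> = push_word (inverse_word wG') (push_word wG' (\<sigma> x))"
      unfolding conj[symmetric] using push_word_inverse_word_left[OF letters(1)] by simp
    also have "\<dots> = \<sigma> x" using push_word_inverse_word_left[OF letters(2)] by simp
    finally show ?thesis .
  qed
  ultimately show ?thesis unfolding P_def by blast
qed

lemma word_length_le:
  "set ws \<subseteq> gen_letters S \<Longrightarrow> word_prod ws = \<sigma> \<Longrightarrow> word_length S \<sigma> \<le> length ws"
  unfolding word_length_def by (rule Least_le) blast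

lemma word_length_witness:
  assumes "generates_houghton n S" "houghton n \<sigma>"
  obtains ws where "length ws = word_length S \<sigma>" "set ws \<subseteq> gen_letters S" "word_prod ws = \<sigma>"
proof -
  have "\<exists>m ws. length ws = m \<and> set ws \<subseteq> gen_letters S \<and> word_prod ws = \<sigma>"
    using assms unfolding generates_houghton_def by blast
  from LeastI_ex[OF this] obtain ws where "length ws = word_length S \<sigma>"
    "set ws \<subseteq> gen_letters S" "word_prod ws = \<sigma>"
    unfolding word_length_def by blast
  then show thesis by (rule that)
qed

lemma word_length_le_push_length:
  assumes gen: "generates_houghton n S"
  obtains L where "\<And>ws. set ws \<subseteq> push_letters n \<Longrightarrow> word_length S (push_word ws) \<le> L * length ws"
proof -
  define sw where "sw l = (SOME w. set w \<subseteq> gen_letters S \<and> word_prod w = push (fst l) (snd l))"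
    for l :: "nat \<times> nat"
  have sw: "set (sw l) \<subseteq> gen_letters S \<and> word_prod (sw l) = push (fst l) (snd l)"
    if "l \<in> push_letters n" for l
  proof -
    have "houghton n (push (fst l) (snd l))"
      using that by (intro houghton_push) (auto simp: push_letters_def)
    then have "\<exists>w. set w \<subseteq> gen_letters S \<and> word_prod w = push (fst l) (snd l)"
      using gen unfolding generates_houghton_def by blast
    then show ?thesis unfolding sw_def by (rule someI_ex)
  qed
  define L where "L = Max (length ` sw ` push_letters n)"
  have "finite (push_letters n)"
    by (rule finite_subset[of _ "{..<n} \<times> {..<n}"]) (auto simp: push_letters_def)
  then have L: "length (sw l) \<le> L" if "l \<in> push_letters n" for l
    unfolding L_def using that by (intro Max_ge) auto
  have substitute: "set (concat (map sw ws)) \<subseteq> gen_letters S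
      \<and> word_prod (concat (map sw ws)) = push_word ws \<and> length (concat (map sw ws)) \<le> L * length ws"
    if "set ws \<subseteq> push_letters n" for ws
    using that
  proof (induction ws)
    case (Cons l ws)
    then show ?case
      using sw[of l] L[of l] by (cases l) (auto simp: word_prod_append push_word_Cons)
  qed (simp add: push_word_def)
  show thesis
  proof (rule that)
    fix ws assume "set ws \<subseteq> push_letters n"
    with substitute show "word_length S (push_word ws) \<le> L * length ws"
      using word_length_le[of "concat (map sw ws)" S "push_word ws"] by (meson le_trans)
  qed
qed

lemma push_length_bound:
  assumes "2 \<le> P"
  shows "real (2 * P + 4 * P * ceillog2 P) \<le> 10 / ln 2 * real P * ln (real P)"
proof -
  have log_ge: "1 \<le> log 2 (real P)" using assms by simp
  have "real (ceillog2 P) < log 2 (real P) + 1" using assms by (intro ceillog2_less_log) simp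
  then have "real P * (2 + 4 * real (ceillog2 P)) \<le> real P * (2 + 4 * (log 2 (real P) + 1))"
    by (intro mult_left_mono) auto
  then have "real (2 * P + 4 * P * ceillog2 P) \<le> real P * (2 + 4 * (log 2 (real P) + 1))"
    by (simp add: algebra_simps)
  also have "\<dots> \<le> real P * (10 * log 2 (real P))"
    using log_ge by (intro mult_left_mono) auto
  also have "\<dots> = 10 / ln 2 * real P * ln (real P)"
    by (simp add: log_def)
  finally show ?thesis .
qed

lemma complexity_le_word_length:
  assumes "finite S" and gen: "generates_houghton n S"
  obtains c where "\<And>\<sigma>. houghton n \<sigma> \<Longrightarrow> complexity n \<sigma> \<le> word_length S \<sigma> * c"
proof
  define c where "c = Max (insert 0 (complexity n ` gen_letters S))"
  have "finite (gen_letters S)" using assms(1) unfolding gen_letters_def by simp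
  then have "complexity n s \<le> c" if "s \<in> gen_letters S" for s
    unfolding c_def using that by (intro Max_ge) auto
  moreover have "houghton n s" if "s \<in> gen_letters S" for s
    using that gen houghton_inv unfolding gen_letters_def generates_houghton_def by auto
  ultimately have letters: "houghton n s \<and> complexity n s \<le> c" if "s \<in> gen_letters S" for s
    using that by blast
  fix \<sigma> assume "houghton n \<sigma>"
  then obtain ws where "length ws = word_length S \<sigma>" "set ws \<subseteq> gen_letters S" "word_prod ws = \<sigma>"
    using word_length_witness[OF gen] by blast
  then show "complexity n \<sigma> \<le> word_length S \<sigma> * c"
    using complexity_word_prod_le[of ws n c] letters by auto
qed

lemma word_length_lower_bound:
  assumes "finite S" "generates_houghton n S"
  obtains C :: real where "C > 0"
    and "\<And>\<sigma>. houghton n \<sigma> \<Longrightarrow> real (complexity n \<sigma>) / C \<le> real (word_length S \<sigma>)"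
proof -
  obtain c where c: "\<And>\<sigma>. houghton n \<sigma> \<Longrightarrow> complexity n \<sigma> \<le> word_length S \<sigma> * c"
    using complexity_le_word_length[OF assms] by blast
  show thesis
  proof (rule that[of "real c + 1"])
    fix \<sigma> assume "houghton n \<sigma>"
    then have "real (complexity n \<sigma>) \<le> real (word_length S \<sigma>) * real c"
      using c by (simp flip: of_nat_mult)
    also have "\<dots> \<le> real (word_length S \<sigma>) * (real c + 1)" by (intro mult_left_mono) auto
    finally show "real (complexity n \<sigma>) / (real c + 1) \<le> real (word_length S \<sigma>)"
      by (simp add: divide_le_eq add_pos_nonneg)
  qed simp
qed

lemma word_length_upper_bound:
  assumes "3 \<le> n" "generates_houghton n S"
  obtains K :: real where "K > 0"
    and "\<And>\<sigma>. houghton n \<sigma> \<Longrightarrow> 2 \<le> complexity n \<sigma> \<Longrightarrow>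
      real (word_length S \<sigma>) \<le> K * real (complexity n \<sigma>) * ln (real (complexity n \<sigma>))"
proof -
  obtain L where L: "\<And>ws. set ws \<subseteq> push_letters n \<Longrightarrow> word_length S (push_word ws) \<le> L * length ws"
    using word_length_le_push_length[OF assms(2)] by blast
  show thesis
  proof (rule that[of "(real L + 1) * 10 / ln 2"])
    fix \<sigma> assume h: "houghton n \<sigma>" and P: "2 \<le> complexity n \<sigma>"
    define P where "P = complexity n \<sigma>"
    obtain ws where ws: "set ws \<subseteq> push_letters n" "length ws \<le> 2 * P + 4 * P * ceillog2 P"
      "push_word ws = \<sigma>"
      using houghton_push_word[OF assms(1) h le_two_power_ceillog2] unfolding P_def by blast
    then have "word_length S \<sigma> \<le> L * (2 * P + 4 * P * ceillog2 P)"
      using L[OF ws(1)] by (metis le_trans mult_le_mono2)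
    then have "real (word_length S \<sigma>) \<le> real L * real (2 * P + 4 * P * ceillog2 P)"
      by (metis of_nat_le_iff of_nat_mult)
    also have "\<dots> \<le> (real L + 1) * (10 / ln 2 * real P * ln (real P))"
      using push_length_bound P unfolding P_def by (intro mult_mono) auto
    finally show "real (word_length S \<sigma>) \<le> (real L + 1) * 10 / ln 2 * real P * ln (real P)"
      by (simp add: field_simps)
  qed simp
qed

theorem mainTheorem5:
  fixes n :: nat and S :: "perm set"
  assumes "3 \<le> n" and "finite S" and "generates_houghton n S"
  shows "\<exists>C K :: real. C > 0 \<and> K > 0 \<and>
           (\<forall>\<sigma>. houghton n \<sigma> \<and> complexity n \<sigma> \<ge> 2 \<longrightarrow>
              real (complexity n \<sigma>) / C \<le> real (word_length S \<sigma>) \<and>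
              real (word_length S \<sigma>) \<le> K * real (complexity n \<sigma>) * ln (real (complexity n \<sigma>)))"
proof -
  obtain C where "C > 0"
    and "\<And>\<sigma>. houghton n \<sigma> \<Longrightarrow> real (complexity n \<sigma>) / C \<le> real (word_length S \<sigma>)"
    using word_length_lower_bound[OF assms(2,3)] by blast
  moreover obtain K where "K > 0"
    and "\<And>\<sigma>. houghton n \<sigma> \<Longrightarrow> 2 \<le> complexity n \<sigma> \<Longrightarrow>
      real (word_length S \<sigma>) \<le> K * real (complexity n \<sigma>) * ln (real (complexity n \<sigma>))"
    using word_length_upper_bound[OF assms(1,3)] by blast
  ultimately show ?thesis by blast
qed

end
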